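(* Let $d\geq 3$, $2\leq k\leq d-1$ and $\theta>0$. If $A\subset\mathbb{R}^d$ has positive reach, $x\in A$, $v_1,\dots,v_k\in\operatorname{Tan}(A,x)\cap S^{d-1}$ and $\Theta(\sigma(0,v_1,\dots,v_k))\geq\theta$, then there exists $\delta>0$ such that any two points $a,b\in B(x,\delta)\cap A$ with $a\neq b$ are $(A,k,2^{-(k+2)}k^{-1}\theta)$-related.
   Context: A set has positive reach if there is $\varepsilon>0$ such that every point at distance less than $\varepsilon$ from it has a unique nearest point in it. $\operatorname{Tan}(A,x)$ is the tangent cone ($u\in\operatorname{Tan}(A,x)$ iff $u=0$ or $r_i(x_i-x)\to u$ for some $x\neq x_i\in A$, $x_i\to x$, $r_i>0$). For $a_0,\dots,a_k\in\mathbb{R}^d$, $\sigma(a_0,\dots,a_k)=\operatorname{conv}\{a_0,\dots,a_k\}$, $|\sigma|$ is its $k$-dimensional volume and (if $\operatorname{diam}\sigma>0$) $\Theta(\sigma)=|\sigma|/(\operatorname{diam}\sigma)^k$. Points $a\neq b$ are $(A,k,\theta')$-related if there exist $z_1,\dots,z_{k-1}\in A$ with $\Theta(\sigma(a,b,z_1,\dots,z_{k-1}))\geq\theta'$. *)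

theory Defs
  imports "HOL-Analysis.Analysis"
begin

definition positive_reach :: "'a::euclidean_space set \<Rightarrow> bool" where
  "positive_reach A \<longleftrightarrow> (\<exists>\<epsilon>>0. \<forall>y. infdist y A < \<epsilon> \<longrightarrow>
      (\<exists>!p. p \<in> A \<and> (\<forall>q\<in>A. dist y p \<le> dist y q)))"

definition Tan :: "'a::euclidean_space set \<Rightarrow> 'a \<Rightarrow> 'a set" where
  "Tan A x = {u. u = 0 \<or> (\<exists>xs r. (\<forall>i. xs i \<in> A \<and> xs i \<noteq> x) \<and> xs \<longlonglongrightarrow> x \<and>
      (\<forall>i. r i > 0) \<and> (\<lambda>i. r i *\<^sub>R (xs i - x)) \<longlonglongrightarrow> u)}"

definition det_nat :: "nat \<Rightarrow> (nat \<Rightarrow> nat \<Rightarrow> real) \<Rightarrow> real" where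
  "det_nat k M = (\<Sum>p | p permutes {..<k}. of_int (sign p) * (\<Prod>i<k. M i (p i)))"

definition simplex_vol :: "nat \<Rightarrow> (nat \<Rightarrow> 'a::euclidean_space) \<Rightarrow> real" where
  "simplex_vol k a = sqrt (det_nat k (\<lambda>i j. (a (Suc i) - a 0) \<bullet> (a (Suc j) - a 0))) / fact k"

definition simplex_diam :: "nat \<Rightarrow> (nat \<Rightarrow> 'a::euclidean_space) \<Rightarrow> real" where
  "simplex_diam k a = diameter (convex hull (a ` {0..k}))"

text \<open>Theta(sigma) = |sigma| / (diam sigma)^k (only meaningful when diam sigma > 0).\<close>
definition Theta :: "nat \<Rightarrow> (nat \<Rightarrow> 'a::euclidean_space) \<Rightarrow> real" where
  "Theta k a = simplex_vol k a / (simplex_diam k a) ^ k"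

definition related :: "'a::euclidean_space set \<Rightarrow> nat \<Rightarrow> real \<Rightarrow> 'a \<Rightarrow> 'a \<Rightarrow> bool" where
  "related A k \<theta>' a b \<longleftrightarrow> a \<noteq> b \<and> (\<exists>z::nat \<Rightarrow> 'a. (\<forall>i\<in>{1..k-1}. z i \<in> A) \<and>
      simplex_diam k (\<lambda>i. if i = 0 then a else if i = 1 then b else z (i - 1)) > 0 \<and>
      Theta k (\<lambda>i. if i = 0 then a else if i = 1 then b else z (i - 1)) \<ge> \<theta>')"

end

theory Submission
  imports Defs "Jordan_Normal_Form.Determinant"
begin

(*
  Let h = |b - a| and e = (b - a) / h. If A has reach at least R, then for every point c of A
  and every unit proximal normal n at c we have (q - c) . n <= |q - c|^2 / (2 R) for all q in A;
  this rests on the nearest point projection being constant along normal rays up to distance R,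
  which follows from Brouwer's fixed point theorem. Hence normals at points near x are almost
  orthogonal to every unit tangent vector v at x, and for a in A near x and small h the point
  a + h v lies within eps h of A.

  Write e in the basis v_1, ..., v_k and drop the v_m whose coefficient has largest modulus. The
  Gram determinant of e and the remaining v_j is at least 1/k^2 times that of v_1, ..., v_k. The
  simplex spanned by a, b and points of A within eps h of a + h v_j (j <> m) is a perturbation of
  the simplex spanned by a, a + h e and the a + h v_j, which loses at most a factor 4 in the Gram
  determinant, while its diameter is at most 2 (1 + eps) h.
*)

no_notation Matrix.scalar_prod (infix "\<bullet>" 70)

section \<open>Gram determinants\<close>

definition gram :: "nat \<Rightarrow> (nat \<Rightarrow> 'a::euclidean_space) \<Rightarrow> real" where
  "gram k u = det_nat k (\<lambda>i j. u i \<bullet> u j)"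

definition gram_mat :: "nat \<Rightarrow> (nat \<Rightarrow> 'a::euclidean_space) \<Rightarrow> real mat" where
  "gram_mat k u = mat k k (\<lambda>(i, j). u i \<bullet> u j)"

lemma gram_mat_carrier: "gram_mat k u \<in> carrier_mat k k"
  unfolding gram_mat_def by simp

lemma gram_eq_det: "gram k u = det (gram_mat k u)"
proof -
  have "det (gram_mat k u) = (\<Sum>p | p permutes {0..<k}. signof p * (\<Prod>i = 0..<k. gram_mat k u $$ (i, p i)))"
    by (rule det_def'[OF gram_mat_carrier])
  also have "\<dots> = (\<Sum>p | p permutes {..<k}. of_int (sign p) * (\<Prod>i<k. u i \<bullet> u (p i)))"
  proof (rule sum.cong)
    fix p assume "p \<in> {p. p permutes {..<k}}"
    then have "i < k \<Longrightarrow> p i < k" for i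
      using permutes_in_image by fastforce
    then show "signof p * (\<Prod>i = 0..<k. gram_mat k u $$ (i, p i)) = of_int (sign p) * (\<Prod>i<k. u i \<bullet> u (p i))"
      by (simp add: atLeast0LessThan gram_mat_def)
  qed (simp add: atLeast0LessThan)
  finally show ?thesis
    unfolding gram_def det_nat_def by simp
qed

lemma gram_add_multiple:
  assumes "j < k" "m < k" "j \<noteq> m"
  shows "gram k (u(m := y + c *\<^sub>R u j)) = gram k (u(m := y))"
proof -
  define B where "B = addrow c m j (gram_mat k (u(m := y)))"
  have B: "B \<in> carrier_mat k k"
    unfolding B_def using gram_mat_carrier by simp
  \<comment> \<open>Adding c times vector j to vector m is a row and then a column operation on the Gram matrix.\<close>
  have "gram_mat k (u(m := y + c *\<^sub>R u j)) = transpose_mat (addrow c m j (transpose_mat B))"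
    by (rule eq_matI) (use assms B in \<open>auto simp: B_def gram_mat_def inner_add_left
          inner_add_right algebra_simps inner_commute\<close>)
  then have "gram k (u(m := y + c *\<^sub>R u j)) = det (addrow c m j (transpose_mat B))"
    unfolding gram_eq_det using B by (simp add: det_transpose)
  also have "\<dots> = det B"
    using det_addrow[OF assms(1) _ transpose_carrier_mat[THEN iffD2, OF B]] assms(3) B by (simp add: det_transpose)
  also have "\<dots> = gram k (u(m := y))"
    unfolding B_def gram_eq_det by (rule det_addrow[OF assms(1) _ gram_mat_carrier]) (use assms(3) in simp)
  finally show ?thesis .
qed

lemma gram_add_combination:
  assumes "m < k" and "S \<subseteq> {..<k} - {m}"
  shows "gram k (u(m := y + (\<Sum>j\<in>S. c j *\<^sub>R u j))) = gram k (u(m := y))"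
proof -
  have "finite S"
    using assms(2) finite_subset by blast
  then show ?thesis
    using assms(2)
  proof (induction S arbitrary: y)
    case (insert j S)
    have "gram k (u(m := y + (\<Sum>j\<in>insert j S. c j *\<^sub>R u j)))
        = gram k (u(m := (y + (\<Sum>j\<in>S. c j *\<^sub>R u j)) + c j *\<^sub>R u j))"
      using insert.hyps by (simp add: algebra_simps)
    also have "\<dots> = gram k (u(m := y + (\<Sum>j\<in>S. c j *\<^sub>R u j)))"
      using insert.prems assms(1) by (intro gram_add_multiple) auto
    also have "\<dots> = gram k (u(m := y))"
      using insert by blast
    finally show ?case .
  qed simp
qed

lemma gram_remove_orthogonal:
  assumes "m < k" and "\<And>j. j < k \<Longrightarrow> j \<noteq> m \<Longrightarrow> u m \<bullet> u j = 0"
  shows "gram k u = (norm (u m))\<^sup>2 * gram (k - 1) (\<lambda>i. u (insert_index m i))"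
proof -
  let ?G = "gram_mat k u"
  have minor: "mat_delete ?G m m = gram_mat (k - 1) (\<lambda>i. u (insert_index m i))"
    by (rule eq_matI) (auto simp: mat_delete_def gram_mat_def insert_index_def)
  have "gram k u = (\<Sum>j<k. ?G $$ (m, j) * cofactor ?G m j)"
    unfolding gram_eq_det by (rule laplace_expansion_row[OF gram_mat_carrier assms(1)])
  also have "\<dots> = (\<Sum>j\<in>{m}. ?G $$ (m, j) * cofactor ?G m j)"
    by (rule sum.mono_neutral_right) (use assms in \<open>auto simp: gram_mat_def\<close>)
  also have "\<dots> = (norm (u m))\<^sup>2 * gram (k - 1) (\<lambda>i. u (insert_index m i))"
    using assms(1) minor by (simp add: cofactor_def gram_eq_det gram_mat_def power2_norm_eq_inner)
  finally show ?thesis .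
qed

lemma span_image_finite:
  fixes u :: "'i \<Rightarrow> 'a::real_vector"
  assumes "finite S"
  shows "span (u ` S) = range (\<lambda>c. \<Sum>j\<in>S. c j *\<^sub>R u j)"
proof
  show "span (u ` S) \<subseteq> range (\<lambda>c. \<Sum>j\<in>S. c j *\<^sub>R u j)"
  proof
    fix y assume "y \<in> span (u ` S)"
    then show "y \<in> range (\<lambda>c. \<Sum>j\<in>S. c j *\<^sub>R u j)"
    proof (induction rule: span_induct_alt)
      case base
      show ?case by (rule range_eqI[of _ _ "\<lambda>_. 0"]) simp
    next
      case (step a x y)
      then obtain j d where "j \<in> S" "x = u j" "y = (\<Sum>i\<in>S. d i *\<^sub>R u i)"
        by auto
      moreover have "(\<Sum>i\<in>S. (if i = j then a else 0) *\<^sub>R u i) = a *\<^sub>R u j"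
        using assms \<open>j \<in> S\<close> by (simp add: if_distrib[of "\<lambda>r. r *\<^sub>R _"] sum.delta cong: if_cong)
      ultimately have "a *\<^sub>R x + y = (\<Sum>i\<in>S. (d i + (if i = j then a else 0)) *\<^sub>R u i)"
        by (simp add: scaleR_add_left sum.distrib)
      then show ?case
        by (simp add: range_eqI[of _ _ "\<lambda>i. d i + (if i = j then a else 0)"])
    qed
  qed
  show "range (\<lambda>c. \<Sum>j\<in>S. c j *\<^sub>R u j) \<subseteq> span (u ` S)"
    by (clarsimp, rule span_sum) (simp add: span_base span_scale)
qed

lemma insert_index_image_lessThan:
  "m < k \<Longrightarrow> insert_index m ` {..<k - 1} = {..<k} - {m}"
  using insert_index_image[of m "k - 1"] by (simp add: atLeast0LessThan)

lemma insert_index_less: "m < k \<Longrightarrow> i < k - 1 \<Longrightarrow> insert_index m i < k"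
  using insert_index_image_lessThan by blast

lemma gram_remove:
  fixes u :: "nat \<Rightarrow> 'a::euclidean_space"
  assumes "m < k" and "u m - r \<in> span (u ` ({..<k} - {m}))"
    and "\<And>j. j < k \<Longrightarrow> j \<noteq> m \<Longrightarrow> r \<bullet> u j = 0"
  shows "gram k u = (norm r)\<^sup>2 * gram (k - 1) (\<lambda>i. u (insert_index m i))"
proof -
  obtain c where c: "u m - r = (\<Sum>j\<in>{..<k} - {m}. c j *\<^sub>R u j)"
    using assms(2) span_image_finite[of "{..<k} - {m}" u] by auto
  have "u = u(m := r + (\<Sum>j\<in>{..<k} - {m}. c j *\<^sub>R u j))"
    using c by (auto simp: algebra_simps)
  then have "gram k u = gram k (u(m := r))"
    using gram_add_combination[OF assms(1), of "{..<k} - {m}" u r c] by simp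
  also have "\<dots> = (norm r)\<^sup>2 * gram (k - 1) (\<lambda>i. u (insert_index m i))"
    using gram_remove_orthogonal[OF assms(1), of "u(m := r)"] assms(3) by simp
  finally show ?thesis .
qed

lemma gram_nonneg: "gram k u \<ge> 0"
proof (induction k arbitrary: u)
  case 0
  show ?case by (simp add: gram_def det_nat_def)
next
  case (Suc k)
  obtain p r where p: "p \<in> span (u ` {..<k})" and u_k: "u k = p + r"
    and r: "\<And>w. w \<in> span (u ` {..<k}) \<Longrightarrow> real_inner_class.orthogonal r w"
    using orthogonal_subspace_decomp_exists by blast
  have "gram (Suc k) u = (norm r)\<^sup>2 * gram (Suc k - 1) (\<lambda>i. u (insert_index k i))"
  proof (rule gram_remove)
    show "u k - r \<in> span (u ` ({..<Suc k} - {k}))"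
      using p u_k by (simp add: lessThan_Suc)
    show "r \<bullet> u j = 0" if "j < Suc k" "j \<noteq> k" for j
      using r[OF span_base] that by (simp add: real_inner_class.orthogonal_def)
  qed simp
  then show ?case
    using Suc.IH by simp
qed

lemma gram_scaleR: "gram k (\<lambda>i. c *\<^sub>R u i) = (c\<^sup>2) ^ k * gram k u"
proof -
  have "(\<Prod>i<k. (c *\<^sub>R u i) \<bullet> (c *\<^sub>R u (p i))) = (c\<^sup>2) ^ k * (\<Prod>i<k. u i \<bullet> u (p i))" for p
    by (simp add: prod.distrib power2_eq_square power_mult_distrib)
  then show ?thesis
    unfolding gram_def det_nat_def by (simp add: sum_distrib_left mult.left_commute)
qed

lemma abs_prod_diff_le:
  fixes a b :: "'i \<Rightarrow> real" and M d :: real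
  assumes "finite S" and "0 \<le> M"
    and "\<And>i. i \<in> S \<Longrightarrow> \<bar>a i\<bar> \<le> M \<and> \<bar>b i\<bar> \<le> M \<and> \<bar>a i - b i\<bar> \<le> d"
  shows "\<bar>prod a S - prod b S\<bar> \<le> real (card S) * M ^ (card S - 1) * d"
  using assms(1,3)
proof (induction S rule: finite_induct)
  case (insert x F)
  have x: "\<bar>a x\<bar> \<le> M" "\<bar>b x\<bar> \<le> M" "\<bar>a x - b x\<bar> \<le> d"
    using insert.prems by auto
  have IH: "\<bar>prod a F - prod b F\<bar> \<le> real (card F) * M ^ (card F - 1) * d"
    using insert by blast
  have prod_a: "\<bar>prod a F\<bar> \<le> M ^ card F"
    unfolding abs_prod using insert.prems prod_mono[of F "\<lambda>i. \<bar>a i\<bar>" "\<lambda>_. M"] by simp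
  have "prod a (insert x F) - prod b (insert x F)
      = (a x - b x) * prod a F + b x * (prod a F - prod b F)"
    using insert.hyps by (simp add: algebra_simps)
  then have "\<bar>prod a (insert x F) - prod b (insert x F)\<bar>
      \<le> \<bar>a x - b x\<bar> * \<bar>prod a F\<bar> + \<bar>b x\<bar> * \<bar>prod a F - prod b F\<bar>"
    by (metis abs_mult abs_triangle_ineq)
  also have "\<dots> \<le> d * M ^ card F + M * (real (card F) * M ^ (card F - 1) * d)"
    using x IH prod_a assms(2) by (intro add_mono mult_mono) auto
  also have "\<dots> = real (card (insert x F)) * M ^ (card (insert x F) - 1) * d"
    using insert.hyps by (cases "card F") (simp_all add: algebra_simps)
  finally show ?case .
qed simp

lemma abs_inner_diff_le:
  fixes x y x' y' :: "'a::real_inner"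
  assumes "norm y \<le> M" "norm x' \<le> M" "norm (x - x') \<le> d" "norm (y - y') \<le> d"
  shows "\<bar>x \<bullet> y - x' \<bullet> y'\<bar> \<le> 2 * M * d"
proof -
  have "x \<bullet> y - x' \<bullet> y' = (x - x') \<bullet> y + x' \<bullet> (y - y')"
    by (simp add: inner_diff_left inner_diff_right)
  then have "\<bar>x \<bullet> y - x' \<bullet> y'\<bar> \<le> norm (x - x') * norm y + norm x' * norm (y - y')"
    by (smt (verit) Cauchy_Schwarz_ineq2)
  also have "\<dots> \<le> d * M + M * d"
    using assms order_trans[OF norm_ge_zero assms(1)] order_trans[OF norm_ge_zero assms(3)] by (intro add_mono mult_mono) auto
  finally show ?thesis by simp
qed

lemma gram_perturb:
  fixes u w :: "nat \<Rightarrow> 'a::euclidean_space" and M d :: real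
  assumes "0 \<le> M" and "\<And>i. i < k \<Longrightarrow> norm (u i) \<le> M \<and> norm (w i) \<le> M \<and> norm (u i - w i) \<le> d"
  shows "\<bar>gram k u - gram k w\<bar> \<le> fact k * (real k * (M\<^sup>2) ^ (k - 1) * (2 * M * d))"
proof -
  let ?B = "real k * (M\<^sup>2) ^ (k - 1) * (2 * M * d)"
  have term_bound: "\<bar>(\<Prod>i<k. u i \<bullet> u (p i)) - (\<Prod>i<k. w i \<bullet> w (p i))\<bar> \<le> ?B"
    if "p permutes {..<k}" for p
  proof (rule order_trans[OF abs_prod_diff_le[where M = "M\<^sup>2" and d = "2 * M * d"
        and a = "\<lambda>i. u i \<bullet> u (p i)" and b = "\<lambda>i. w i \<bullet> w (p i)"]])
    fix i assume "i \<in> {..<k}"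
    then have "i < k" "p i < k"
      using permutes_in_image[OF that] by auto
    then show "\<bar>u i \<bullet> u (p i)\<bar> \<le> M\<^sup>2 \<and> \<bar>w i \<bullet> w (p i)\<bar> \<le> M\<^sup>2
        \<and> \<bar>u i \<bullet> u (p i) - w i \<bullet> w (p i)\<bar> \<le> 2 * M * d"
      using assms Cauchy_Schwarz_ineq2 abs_inner_diff_le[of "u (p i)" M "w i"]
      by (smt (verit, best) mult_mono norm_ge_zero power2_eq_square)
  qed (use assms(1) in simp_all)
  have "\<bar>gram k u - gram k w\<bar>
      = \<bar>\<Sum>p | p permutes {..<k}. of_int (sign p) * ((\<Prod>i<k. u i \<bullet> u (p i)) - (\<Prod>i<k. w i \<bullet> w (p i)))\<bar>"
    unfolding gram_def det_nat_def by (simp add: sum_subtractf right_diff_distrib)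
  also have "\<dots> \<le> (\<Sum>p | p permutes {..<k}. ?B)"
    using term_bound by (intro sum_abs[THEN order_trans] sum_mono) (simp add: abs_mult sign_def)
  also have "\<dots> = fact k * ?B"
    using card_permutations[of "{..<k}" k] by simp
  finally show ?thesis .
qed

lemma gram_case_nat:
  fixes W :: "nat \<Rightarrow> 'a::euclidean_space"
  assumes "y - r \<in> span (W ` {..<n})" and "\<And>j. j < n \<Longrightarrow> r \<bullet> W j = 0"
  shows "gram (Suc n) (case_nat y W) = (norm r)\<^sup>2 * gram n W"
proof -
  have "case_nat y W ` ({..<Suc n} - {0}) = W ` {..<n}"
    by (auto simp: lessThan_Suc_eq_insert_0 image_image)
  then have "gram (Suc n) (case_nat y W) = (norm r)\<^sup>2 * gram (Suc n - 1) (\<lambda>i. case_nat y W (insert_index 0 i))"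
    using assms by (intro gram_remove) (auto simp: gr0_conv_Suc)
  then show ?thesis
    by simp
qed

lemma norm_le_max_coefficient:
  fixes V :: "nat \<Rightarrow> 'a::real_normed_vector"
  assumes "1 \<le> k" and V: "\<And>i. i < k \<Longrightarrow> norm (V i) = 1" and "p \<in> span (V ` {..<k})"
  obtains c m where "m < k" and "p = (\<Sum>j<k. c j *\<^sub>R V j)" and "norm p \<le> real k * \<bar>c m\<bar>"
proof -
  obtain c where c: "p = (\<Sum>j<k. c j *\<^sub>R V j)"
    using assms(3) span_image_finite[of "{..<k}" V] by auto
  define m where "m = arg_min_on (\<lambda>j. - \<bar>c j\<bar>) {..<k}"
  have "m < k"
    using arg_min_if_finite(1)[of "{..<k}" "\<lambda>j. - \<bar>c j\<bar>"] assms(1) unfolding m_def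
    by (auto simp: lessThan_empty_iff)
  have "norm p \<le> (\<Sum>j<k. norm (c j *\<^sub>R V j))"
    unfolding c by (rule norm_sum)
  also have "\<dots> \<le> (\<Sum>j<k. \<bar>c m\<bar>)"
    using arg_min_least[of "{..<k}" _ "\<lambda>j. - \<bar>c j\<bar>"] V unfolding m_def by (intro sum_mono) auto
  finally show ?thesis
    using that \<open>m < k\<close> c by simp
qed

lemma norm_scaled_orthogonal_sum_ge:
  fixes p q r :: "'a::real_inner" and K c :: real
  assumes "norm (p + q) = 1" "p \<bullet> q = 0" "r \<bullet> q = 0" and "norm r \<le> 1"
    and "norm p \<le> K * \<bar>c\<bar>" and "1 \<le> K"
  shows "(norm r)\<^sup>2 / K\<^sup>2 \<le> (norm (c *\<^sub>R r + q))\<^sup>2"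
proof -
  have "(norm p)\<^sup>2 + (norm q)\<^sup>2 = 1"
    using assms(1,2) norm_add_Pythagorean[of p q] by (simp add: real_inner_class.orthogonal_def)
  moreover have "(norm p)\<^sup>2 \<le> K\<^sup>2 * c\<^sup>2"
    using power_mono[OF assms(5) norm_ge_zero, of 2] by (simp add: power_mult_distrib)
  moreover have "(norm q)\<^sup>2 \<le> K\<^sup>2 * (norm q)\<^sup>2"
    using assms(6) by (simp add: mult_le_cancel_right1)
  ultimately have "1 \<le> K\<^sup>2 * (c\<^sup>2 + (norm q)\<^sup>2)"
    by (simp add: distrib_left)
  then have inverse_le: "1 / K\<^sup>2 \<le> c\<^sup>2 + (norm q)\<^sup>2"
    using assms(6) by (simp add: divide_le_eq mult.commute)
  have "(norm r)\<^sup>2 / K\<^sup>2 \<le> (norm r)\<^sup>2 * (c\<^sup>2 + (norm q)\<^sup>2)"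
    using mult_left_mono[OF inverse_le, of "(norm r)\<^sup>2"] by simp
  also have "\<dots> \<le> c\<^sup>2 * (norm r)\<^sup>2 + (norm q)\<^sup>2"
    using assms(4) mult_right_mono[of "(norm r)\<^sup>2" 1 "(norm q)\<^sup>2"] by (simp add: algebra_simps power_le_one)
  also have "\<dots> = (norm (c *\<^sub>R r + q))\<^sup>2"
    using assms(3) norm_add_Pythagorean[of "c *\<^sub>R r" q]
    by (simp add: real_inner_class.orthogonal_def power_mult_distrib)
  finally show ?thesis .
qed

lemma gram_replace_unit_vector:
  fixes V :: "nat \<Rightarrow> 'a::euclidean_space"
  assumes "1 \<le> k" and V: "\<And>i. i < k \<Longrightarrow> norm (V i) = 1" and "norm e = 1"
  shows "\<exists>m<k. gram k V / (real k)\<^sup>2 \<le> gram k (case_nat e (\<lambda>i. V (insert_index m i)))"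
proof -
  obtain p eo where p: "p \<in> span (V ` {..<k})" and e: "e = p + eo"
    and eo: "\<And>w. w \<in> span (V ` {..<k}) \<Longrightarrow> eo \<bullet> w = 0"
    using orthogonal_subspace_decomp_exists[of "V ` {..<k}" e]
    unfolding real_inner_class.orthogonal_def by blast
  obtain c m where "m < k" and c: "p = (\<Sum>j<k. c j *\<^sub>R V j)" and p_le: "norm p \<le> real k * \<bar>c m\<bar>"
    using norm_le_max_coefficient[OF assms(1) V p] by blast
  define W where "W = (\<lambda>i. V (insert_index m i))"
  have W_img: "W ` {..<k - 1} = V ` ({..<k} - {m})"
    unfolding W_def image_image[symmetric] insert_index_image_lessThan[OF \<open>m < k\<close>] ..
  obtain pm rm where pm: "pm \<in> span (W ` {..<k - 1})" and V_m: "V m = pm + rm"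
    and rm: "\<And>w. w \<in> span (W ` {..<k - 1}) \<Longrightarrow> rm \<bullet> w = 0"
    using orthogonal_subspace_decomp_exists[of "W ` {..<k - 1}" "V m"]
    unfolding real_inner_class.orthogonal_def by blast
  \<comment> \<open>r' is the component of e orthogonal to the vectors other than V m; choosing the
    coefficient c m of largest modulus keeps it large.\<close>
  define r' where "r' = c m *\<^sub>R rm + eo"
  have gram_V: "gram k V = (norm rm)\<^sup>2 * gram (k - 1) W"
    unfolding W_def
  proof (rule gram_remove[OF \<open>m < k\<close>])
    show "V m - rm \<in> span (V ` ({..<k} - {m}))"
      using pm V_m W_img by simp
    show "rm \<bullet> V j = 0" if "j < k" "j \<noteq> m" for j
      using rm[OF span_base] W_img that by blast
  qed
  have "e - r' = (\<Sum>j\<in>{..<k} - {m}. c j *\<^sub>R V j) + c m *\<^sub>R pm"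
    using e c V_m \<open>m < k\<close> by (simp add: r'_def sum.remove algebra_simps)
  also have "\<dots> \<in> span (W ` {..<k - 1})"
    using pm W_img by (intro span_add span_sum span_scale) (auto intro: span_base)
  finally have "e - r' \<in> span (W ` {..<k - 1})" .
  moreover have "r' \<bullet> W j = 0" if "j < k - 1" for j
  proof -
    have "W j \<in> V ` {..<k}"
      using W_img that by blast
    then show ?thesis
      using rm[OF span_base] eo[OF span_base] that by (simp add: r'_def inner_add_left)
  qed
  ultimately have "gram (Suc (k - 1)) (case_nat e W) = (norm r')\<^sup>2 * gram (k - 1) W"
    by (rule gram_case_nat)
  then have gram_C: "gram k (case_nat e W) = (norm r')\<^sup>2 * gram (k - 1) W"
    using assms(1) by simp
  have "pm \<in> span (V ` {..<k})"
    using pm W_img span_mono[of "W ` {..<k - 1}" "V ` {..<k}"] by auto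
  moreover have "V m \<in> span (V ` {..<k})"
    using \<open>m < k\<close> by (intro span_base) auto
  ultimately have "rm \<in> span (V ` {..<k})"
    using V_m span_diff by (metis add_diff_cancel_left')
  then have "rm \<bullet> eo = 0"
    using eo inner_commute by metis
  have "(norm pm)\<^sup>2 + (norm rm)\<^sup>2 = 1"
    using V[OF \<open>m < k\<close>] V_m norm_add_Pythagorean[of pm rm] rm[OF pm]
    by (simp add: real_inner_class.orthogonal_def inner_commute)
  then have "(norm rm)\<^sup>2 \<le> 1"
    using zero_le_power2[of "norm pm"] by linarith
  then have "norm rm \<le> 1"
    using power2_le_imp_le[of "norm rm" 1] by simp
  then have "(norm rm)\<^sup>2 / (real k)\<^sup>2 \<le> (norm r')\<^sup>2"
    unfolding r'_def using \<open>rm \<bullet> eo = 0\<close> assms(1,3) e eo[OF p] p_le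
    by (intro norm_scaled_orthogonal_sum_ge[of p]) (auto simp: inner_commute)
  then have "(norm rm)\<^sup>2 / (real k)\<^sup>2 * gram (k - 1) W \<le> (norm r')\<^sup>2 * gram (k - 1) W"
    by (rule mult_right_mono[OF _ gram_nonneg])
  then have "gram k V / (real k)\<^sup>2 \<le> gram k (case_nat e W)"
    unfolding gram_V gram_C by simp
  then show ?thesis
    using \<open>m < k\<close> unfolding W_def by blast
qed

lemma gram_ge_perturbed:
  fixes u C :: "nat \<Rightarrow> 'a::euclidean_space"
  assumes "1 \<le> k" and "0 \<le> h" and "0 \<le> \<epsilon>" "\<epsilon> \<le> 1"
    and close: "\<And>i. i < k \<Longrightarrow> norm (C i) = 1 \<and> norm (u i - h *\<^sub>R C i) \<le> \<epsilon> * h"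
  shows "(h\<^sup>2) ^ k * (gram k C - fact k * real k * 4 ^ k * \<epsilon>) \<le> gram k u"
proof -
  have "norm (u i) \<le> 2 * h \<and> norm (h *\<^sub>R C i) \<le> 2 * h \<and> norm (u i - h *\<^sub>R C i) \<le> \<epsilon> * h"
    if "i < k" for i
    using close[OF that] norm_triangle_ineq[of "u i - h *\<^sub>R C i" "h *\<^sub>R C i"]
      mult_left_le_one_le[OF assms(2,3,4)] assms(2) by simp
  then have "\<bar>gram k u - gram k (\<lambda>i. h *\<^sub>R C i)\<bar>
      \<le> fact k * (real k * ((2 * h)\<^sup>2) ^ (k - 1) * (2 * (2 * h) * (\<epsilon> * h)))"
    using assms(2) by (intro gram_perturb) auto
  also have "\<dots> = (h\<^sup>2) ^ k * (fact k * real k * 4 ^ k * \<epsilon>)"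
  proof -
    obtain m where "k = Suc m"
      using assms(1) by (cases k) auto
    then show ?thesis
      by (simp add: power_mult_distrib algebra_simps power2_eq_square)
  qed
  finally show ?thesis
    by (simp add: gram_scaleR right_diff_distrib)
qed

section \<open>Simplices\<close>

lemma simplex_vol_eq_gram: "simplex_vol k P = sqrt (gram k (\<lambda>i. P (Suc i) - P 0)) / fact k"
  by (simp add: simplex_vol_def gram_def)

lemma dist_le_simplex_diam: "i \<le> k \<Longrightarrow> j \<le> k \<Longrightarrow> dist (P i) (P j) \<le> simplex_diam k P"
  unfolding simplex_diam_def
  by (intro diameter_bounded_bound finite_imp_bounded_convex_hull hull_inc) auto

lemma simplex_diam_le:
  assumes "\<And>i. i \<le> k \<Longrightarrow> dist c (P i) \<le> r" and "0 \<le> r"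
  shows "simplex_diam k P \<le> 2 * r"
proof -
  have hull: "convex hull (P ` {0..k}) \<subseteq> cball c r"
    using assms(1) by (intro hull_minimal) (auto simp: convex_cball)
  show ?thesis
    unfolding simplex_diam_def
  proof (rule diameter_le)
    fix y z
    assume "y \<in> convex hull (P ` {0..k})" "z \<in> convex hull (P ` {0..k})"
    then have "dist c y \<le> r" "dist c z \<le> r"
      using hull by auto
    then show "norm (y - z) \<le> 2 * r"
      using dist_triangle[of y z c] by (simp add: dist_commute dist_norm)
  qed (use assms(2) in simp)
qed

lemma Theta_ge:
  assumes "0 \<le> V" "V \<le> simplex_vol k P" and "0 < simplex_diam k P" "simplex_diam k P \<le> D"
  shows "V / D ^ k \<le> Theta k P"
  unfolding Theta_def using assms by (intro frac_le power_mono) auto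

lemma Theta_le_simplex_vol:
  assumes "1 \<le> simplex_diam k P" and "0 \<le> simplex_vol k P"
  shows "Theta k P \<le> simplex_vol k P"
  unfolding Theta_def using assms one_le_power[OF assms(1), of k]
  by (simp add: divide_le_eq mult_le_cancel_left1)

lemma Theta_unit_frame_le_sqrt_gram:
  assumes "1 \<le> k" and "norm (v 1) = 1"
  shows "Theta k (\<lambda>i. if i = 0 then 0 else v i) * fact k \<le> sqrt (gram k (\<lambda>i. v (Suc i)))"
proof -
  let ?P = "\<lambda>i. if i = 0 then 0 else v i"
  have "dist (?P 0) (?P 1) \<le> simplex_diam k ?P"
    using assms(1) by (intro dist_le_simplex_diam) auto
  then have "Theta k ?P \<le> simplex_vol k ?P"
    using assms(2) by (intro Theta_le_simplex_vol) (auto simp: simplex_vol_eq_gram gram_nonneg)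
  then show ?thesis
    by (simp add: simplex_vol_eq_gram field_simps)
qed

lemma simplex_vol_ge_perturbed:
  fixes P C :: "nat \<Rightarrow> 'a::euclidean_space"
  assumes "1 \<le> k" and "0 < h" and "0 \<le> \<epsilon>" "\<epsilon> \<le> 1"
    and "fact k * real k * 4 ^ k * \<epsilon> \<le> 3/4 * gram k C"
    and "\<And>i. i < k \<Longrightarrow> norm (C i) = 1 \<and> norm (P (Suc i) - P 0 - h *\<^sub>R C i) \<le> \<epsilon> * h"
  shows "h ^ k * sqrt (gram k C) / (2 * fact k) \<le> simplex_vol k P"
proof -
  have "(h ^ k)\<^sup>2 = (h\<^sup>2) ^ k"
    by (simp add: power_mult[symmetric] mult.commute)
  moreover have "gram k C / 4 \<le> gram k C - fact k * real k * 4 ^ k * \<epsilon>"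
    using assms(5) by simp
  ultimately have "(h ^ k)\<^sup>2 * (gram k C / 4) \<le> (h\<^sup>2) ^ k * (gram k C - fact k * real k * 4 ^ k * \<epsilon>)"
    by (metis mult_left_mono zero_le_power2)
  also have "\<dots> \<le> gram k (\<lambda>i. P (Suc i) - P 0)"
    using assms by (intro gram_ge_perturbed) auto
  finally have "sqrt ((h ^ k)\<^sup>2 * (gram k C / 4)) \<le> sqrt (gram k (\<lambda>i. P (Suc i) - P 0))"
    by simp
  moreover have "sqrt ((h ^ k)\<^sup>2 * (gram k C / 4)) = h ^ k * sqrt (gram k C) / 2"
  proof -
    have "sqrt 4 = (2::real)"
      by (rule real_sqrt_unique) simp_all
    then show ?thesis
      using assms(2) by (simp add: real_sqrt_mult real_sqrt_divide)
  qed
  ultimately have sqrt_gram: "h ^ k * sqrt (gram k C) / 2 \<le> sqrt (gram k (\<lambda>i. P (Suc i) - P 0))"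
    by linarith
  show ?thesis
    using divide_right_mono[OF sqrt_gram, of "fact k"] by (simp add: simplex_vol_eq_gram mult.commute)
qed

lemma simplex_diam_le_perturbed:
  fixes P C :: "nat \<Rightarrow> 'a::euclidean_space"
  assumes "0 \<le> h" and "0 \<le> \<epsilon>"
    and close: "\<And>i. i < k \<Longrightarrow> norm (C i) = 1 \<and> norm (P (Suc i) - P 0 - h *\<^sub>R C i) \<le> \<epsilon> * h"
  shows "simplex_diam k P \<le> 2 * ((1 + \<epsilon>) * h)"
proof (rule simplex_diam_le)
  fix i
  assume "i \<le> k"
  show "dist (P 0) (P i) \<le> (1 + \<epsilon>) * h"
  proof (cases i)
    case (Suc j)
    then have "norm (P i - P 0) \<le> norm (h *\<^sub>R C j) + \<epsilon> * h"
      using close[of j] \<open>i \<le> k\<close> norm_triangle_ineq[of "P i - P 0 - h *\<^sub>R C j" "h *\<^sub>R C j"] by simp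
    then show ?thesis
      using close[of j] Suc \<open>i \<le> k\<close> assms(1) by (simp add: dist_norm norm_minus_commute algebra_simps)
  qed (use assms(1,2) in simp)
qed (use assms(1,2) in simp)

lemma Theta_ge_perturbed_frame:
  fixes P C :: "nat \<Rightarrow> 'a::euclidean_space"
  assumes "1 \<le> k" and "0 < h" and "dist (P 0) (P 1) = h"
    and "0 \<le> \<epsilon>" and "(1 + \<epsilon>) ^ k \<le> 2" and "fact k * real k * 4 ^ k * \<epsilon> \<le> 3/4 * gram k C"
    and close: "\<And>i. i < k \<Longrightarrow> norm (C i) = 1 \<and> norm (P (Suc i) - P 0 - h *\<^sub>R C i) \<le> \<epsilon> * h"
  shows "0 < simplex_diam k P" and "sqrt (gram k C) / (2 ^ (k + 2) * fact k) \<le> Theta k P"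
proof -
  have "1 + \<epsilon> \<le> 2"
    using power_increasing[OF assms(1), of "1 + \<epsilon>"] assms(4,5) by simp
  then have vol: "h ^ k * sqrt (gram k C) / (2 * fact k) \<le> simplex_vol k P"
    using assms(1,2,4,6) close by (intro simplex_vol_ge_perturbed) auto
  have diam_le: "simplex_diam k P \<le> 2 * ((1 + \<epsilon>) * h)"
    using assms(2,4) close by (intro simplex_diam_le_perturbed) auto
  have "h \<le> simplex_diam k P"
    using dist_le_simplex_diam[of 0 k 1 P] assms(1,3) by simp
  then show diam_pos: "0 < simplex_diam k P"
    using assms(2) by simp
  let ?V = "h ^ k * sqrt (gram k C) / (2 * fact k)" and ?D = "2 * ((1 + \<epsilon>) * h)"
  have "sqrt (gram k C) / (2 ^ (k + 2) * fact k) = ?V / (2 ^ (k + 1) * h ^ k)"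
    using assms(2) by (simp add: field_simps)
  also have "\<dots> \<le> ?V / ?D ^ k"
  proof (rule divide_left_mono)
    have "?D ^ k = (1 + \<epsilon>) ^ k * (2 ^ k * h ^ k)"
      by (simp add: power_mult_distrib)
    also have "\<dots> \<le> 2 * (2 ^ k * h ^ k)"
      using assms(2) by (intro mult_right_mono[OF assms(5)]) simp
    finally show "?D ^ k \<le> 2 ^ (k + 1) * h ^ k"
      by simp
  qed (use assms(2,4) in \<open>auto simp: gram_nonneg\<close>)
  also have "\<dots> \<le> Theta k P"
    using vol diam_pos diam_le assms(2) by (intro Theta_ge) (auto simp: gram_nonneg)
  finally show "sqrt (gram k C) / (2 ^ (k + 2) * fact k) \<le> Theta k P" .
qed

lemma related_of_approx_tangent_frame:
  fixes V Z :: "nat \<Rightarrow> 'a::euclidean_space"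
  assumes "2 \<le> k" and V: "\<And>j. j < k \<Longrightarrow> norm (V j) = 1" and \<theta>: "\<theta> * fact k \<le> sqrt (gram k V)"
    and "0 \<le> \<epsilon>" "(1 + \<epsilon>) ^ k \<le> 2" and \<epsilon>: "fact k * real k * 4 ^ k * \<epsilon> \<le> 3/4 * (gram k V / (real k)\<^sup>2)"
    and "a \<noteq> b" and Z: "\<And>j. j < k \<Longrightarrow> Z j \<in> A \<and> norm (Z j - (a + dist a b *\<^sub>R V j)) \<le> \<epsilon> * dist a b"
  shows "related A k (\<theta> / (2 ^ (k + 2) * real k)) a b"
proof -
  define h e where "h = dist a b" and "e = sgn (b - a)"
  have "0 < h" "norm e = 1" "b - a = h *\<^sub>R e"
    using \<open>a \<noteq> b\<close> by (auto simp: h_def e_def dist_norm norm_sgn sgn_div_norm norm_minus_commute)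
  obtain m where "m < k" and gram_C: "gram k V / (real k)\<^sup>2 \<le> gram k (case_nat e (\<lambda>i. V (insert_index m i)))"
    using gram_replace_unit_vector[of k V e] assms(1) V \<open>norm e = 1\<close> by auto
  define C where "C = case_nat e (\<lambda>i. V (insert_index m i))"
  define z where "z i = Z (insert_index m (i - 1))" for i
  define P where "P = (\<lambda>i. if i = 0 then a else if i = 1 then b else z (i - 1))"
  have "norm (C i) = 1 \<and> norm (P (Suc i) - P 0 - h *\<^sub>R C i) \<le> \<epsilon> * h" if "i < k" for i
  proof (cases i)
    case 0
    then show ?thesis
      using \<open>norm e = 1\<close> \<open>b - a = h *\<^sub>R e\<close> \<open>0 < h\<close> assms(4) by (simp add: C_def P_def)
  next
    case (Suc j)
    then have "insert_index m j < k"
      using that \<open>m < k\<close> by (intro insert_index_less) auto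
    then show ?thesis
      using Suc V Z unfolding C_def P_def z_def h_def by (simp add: algebra_simps)
  qed
  moreover have "dist (P 0) (P 1) = h"
    by (simp add: P_def h_def)
  moreover have "fact k * real k * 4 ^ k * \<epsilon> \<le> 3/4 * gram k C"
    using \<epsilon> gram_C unfolding C_def by linarith
  ultimately have "0 < simplex_diam k P" and Theta_C: "sqrt (gram k C) / (2 ^ (k + 2) * fact k) \<le> Theta k P"
    using Theta_ge_perturbed_frame[of k h P \<epsilon> C] assms(1,4,5) \<open>0 < h\<close> by auto
  have "\<theta> * fact k / real k \<le> sqrt (gram k C)"
  proof -
    have "sqrt (gram k V) / real k \<le> sqrt (gram k C)"
      using real_sqrt_le_mono[OF gram_C] assms(1) by (simp add: real_sqrt_divide C_def)
    then show ?thesis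
      using \<theta> assms(1) divide_right_mono[OF \<theta>, of "real k"] by linarith
  qed
  then have "(\<theta> * fact k / real k) / (2 ^ (k + 2) * fact k) \<le> sqrt (gram k C) / (2 ^ (k + 2) * fact k)"
    by (intro divide_right_mono) auto
  then have "\<theta> / (2 ^ (k + 2) * real k) \<le> sqrt (gram k C) / (2 ^ (k + 2) * fact k)"
    by (simp add: mult.commute)
  also note Theta_C
  finally have "\<theta> / (2 ^ (k + 2) * real k) \<le> Theta k P" .
  moreover have "z i \<in> A" if "i \<in> {1..k - 1}" for i
    using Z[of "insert_index m (i - 1)"] insert_index_less[OF \<open>m < k\<close>, of "i - 1"] that
    by (auto simp: z_def)
  ultimately show ?thesis
    unfolding related_def using \<open>a \<noteq> b\<close> \<open>0 < simplex_diam k P\<close>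
    by (intro conjI exI[of _ z]) (auto simp: P_def)
qed

lemma one_plus_power_le_two:
  fixes \<epsilon> :: real
  assumes "0 \<le> \<epsilon>" and "real k * \<epsilon> \<le> ln 2"
  shows "(1 + \<epsilon>) ^ k \<le> 2"
proof -
  have "(1 + \<epsilon>) ^ k \<le> exp \<epsilon> ^ k"
    using assms(1) by (intro power_mono exp_ge_add_one_self) auto
  also have "\<dots> = exp (real k * \<epsilon>)"
    by (simp add: exp_of_nat_mult)
  also have "\<dots> \<le> 2"
    using assms(2) by (metis exp_le_cancel_iff exp_ln zero_less_numeral)
  finally show ?thesis .
qed

lemma frame_tolerance_exists:
  fixes G :: real
  assumes "2 \<le> k" and "0 < G"
  obtains \<epsilon> where "0 < \<epsilon>" and "(1 + \<epsilon>) ^ k \<le> 2"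
    and "fact k * real k * 4 ^ k * \<epsilon> \<le> 3/4 * (G / (real k)\<^sup>2)"
proof -
  define \<epsilon> where "\<epsilon> = min (ln 2 / real k) (3/4 * (G / (real k)\<^sup>2) / (fact k * real k * 4 ^ k))"
  have "0 < fact k * real k * 4 ^ k"
    using assms(1) by simp
  then have "0 < \<epsilon>"
    using assms by (simp add: \<epsilon>_def)
  have "real k * \<epsilon> \<le> ln 2"
    using min.cobounded1[of "ln 2 / real k"] assms(1) by (simp add: \<epsilon>_def le_divide_eq mult.commute)
  then have "(1 + \<epsilon>) ^ k \<le> 2"
    using \<open>0 < \<epsilon>\<close> by (intro one_plus_power_le_two) auto
  moreover have "fact k * real k * 4 ^ k * \<epsilon> \<le> 3/4 * (G / (real k)\<^sup>2)"
  proof -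
    have "\<epsilon> \<le> 3/4 * (G / (real k)\<^sup>2) / (fact k * real k * 4 ^ k)"
      unfolding \<epsilon>_def by (rule min.cobounded2)
    then show ?thesis
      by (simp only: pos_le_divide_eq[OF \<open>0 < fact k * real k * 4 ^ k\<close>] mult.commute)
  qed
  ultimately show ?thesis
    using that \<open>0 < \<epsilon>\<close> by blast
qed

section \<open>Sets of positive reach\<close>

locale reach_radius =
  fixes A :: "'a::euclidean_space set" and R :: real
  assumes R_pos: "0 < R"
    and unique_nearest: "\<And>y. infdist y A < R \<Longrightarrow> \<exists>!p. p \<in> A \<and> (\<forall>q\<in>A. dist y p \<le> dist y q)"
begin

definition proj :: "'a \<Rightarrow> 'a" where
  "proj y = (THE p. p \<in> A \<and> (\<forall>q\<in>A. dist y p \<le> dist y q))"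

abbreviation tube :: "'a set" where
  "tube \<equiv> {y. infdist y A < R}"

lemma nonempty: "A \<noteq> {}"
  using unique_nearest[of 0] R_pos by (auto simp: infdist_def)

lemma proj_in: "y \<in> tube \<Longrightarrow> proj y \<in> A"
  and proj_nearest: "y \<in> tube \<Longrightarrow> q \<in> A \<Longrightarrow> dist y (proj y) \<le> dist y q"
  using theI'[OF unique_nearest[of y]] unfolding proj_def by auto

lemma proj_unique: "y \<in> tube \<Longrightarrow> p \<in> A \<Longrightarrow> (\<And>q. q \<in> A \<Longrightarrow> dist y p \<le> dist y q) \<Longrightarrow> proj y = p"
  using unique_nearest[of y] proj_in proj_nearest by blast

lemma dist_proj: "y \<in> tube \<Longrightarrow> dist y (proj y) = infdist y A"
  using proj_in proj_nearest infdist_le[of "proj y" A y] nonempty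
  by (intro antisym) (auto simp: infdist_def intro!: cINF_greatest)

lemma proj_self: "y \<in> A \<Longrightarrow> proj y = y"
  using R_pos by (intro proj_unique) auto

lemma tube_contains: "dist y a < R \<Longrightarrow> a \<in> A \<Longrightarrow> y \<in> tube"
  using infdist_le[of a A y] by simp

lemma closed: "closed A"
proof -
  have "y \<in> A" if "y \<in> closure A" for y
  proof -
    have "infdist y A = 0"
      using that nonempty in_closure_iff_infdist_zero by blast
    then have "y \<in> tube" and "dist y (proj y) = 0"
      using R_pos dist_proj by auto
    then show ?thesis
      using proj_in by (metis dist_eq_0_iff)
  qed
  then show ?thesis
    using closure_subset_eq by blast
qed

lemma open_tube: "open tube"
  by (intro open_Collect_less continuous_intros)

lemma continuous_on_proj: "continuous_on tube proj"
  unfolding continuous_on_iff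
proof (intro ballI allI impI)
  fix y and e :: real
  assume y: "y \<in> tube" and "0 < e"
  \<comment> \<open>Points of A that are far from proj y are uniformly farther from y than proj y,
    by compactness and uniqueness of the nearest point.\<close>
  define K where "K = A \<inter> cball y (infdist y A + 1) - ball (proj y) e"
  have "compact K"
    unfolding K_def by (intro compact_diff closed_Int_compact closed compact_cball open_ball)
  have "\<exists>g>0. \<forall>p\<in>K. infdist y A + g \<le> dist y p"
  proof (cases "K = {}")
    case False
    obtain p0 where p0: "p0 \<in> K" and p0_min: "\<And>p. p \<in> K \<Longrightarrow> dist y p0 \<le> dist y p"
      using continuous_attains_inf[OF \<open>compact K\<close> False continuous_on_dist[OF continuous_on_const continuous_on_id]]
      by blast
    have "p0 \<in> A" "p0 \<noteq> proj y"
      using p0 \<open>0 < e\<close> unfolding K_def by auto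
    then have "infdist y A < dist y p0"
      using proj_unique[OF y \<open>p0 \<in> A\<close>] infdist_le[of _ A y] by (metis order.not_eq_order_implies_strict)
    then show ?thesis
      using p0_min by (intro exI[of _ "dist y p0 - infdist y A"]) auto
  qed (auto intro: exI[of _ 1])
  then obtain g where "0 < g" and g: "\<And>p. p \<in> K \<Longrightarrow> infdist y A + g \<le> dist y p"
    by blast
  show "\<exists>d>0. \<forall>y'\<in>tube. dist y' y < d \<longrightarrow> dist (proj y') (proj y) < e"
  proof (intro exI[of _ "min (1/2) (g/2)"] conjI ballI impI)
    fix y' assume "y' \<in> tube" and y'_near: "dist y' y < min (1/2) (g/2)"
    have "dist y (proj y') \<le> dist y y' + infdist y' A"
      using dist_triangle[of y "proj y'" y'] dist_proj[OF \<open>y' \<in> tube\<close>] by simp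
    also have "\<dots> \<le> infdist y A + 2 * dist y' y"
      using infdist_triangle[of y' A y] by (simp add: dist_commute)
    finally have "dist y (proj y') < infdist y A + g" "dist y (proj y') \<le> infdist y A + 1"
      using y'_near by auto
    then show "dist (proj y') (proj y) < e"
      using g proj_in[OF \<open>y' \<in> tube\<close>] unfolding K_def by (force simp: dist_commute)
  qed (use \<open>0 < g\<close> in auto)
qed

lemma proj_segment:
  assumes "y \<in> tube" and "0 \<le> t" "t \<le> 1"
  shows "proj (proj y + t *\<^sub>R (y - proj y)) = proj y"
proof -
  let ?c = "proj y" and ?b = "proj y + t *\<^sub>R (y - proj y)"
  have "y - ?b = (1 - t) *\<^sub>R (y - ?c)" and "?b - ?c = t *\<^sub>R (y - ?c)"
    by (simp_all add: algebra_simps)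
  then have dist_y_b: "dist y ?b = (1 - t) * dist y ?c" and dist_b_c: "dist ?b ?c = t * dist y ?c"
    using assms(2,3) by (simp_all add: dist_norm)
  have nearest: "dist ?b ?c \<le> dist ?b q" if "q \<in> A" for q
    using proj_nearest[OF assms(1) that] dist_triangle[of y q ?b] dist_y_b dist_b_c
    by (simp add: algebra_simps)
  have "dist ?b ?c \<le> dist y ?c"
    using dist_b_c assms(2,3) mult_left_le_one_le[of "dist y ?c" t] by simp
  also have "\<dots> < R"
    using dist_proj[OF assms(1)] assms(1) by simp
  finally have "dist ?b ?c < R" .
  then show ?thesis
    using proj_in[OF assms(1)] nearest by (intro proj_unique tube_contains) auto
qed

lemma proj_sphere_fixed_point:
  assumes "0 < r" and "cball b r \<subseteq> tube" and "\<And>z. z \<in> cball b r \<Longrightarrow> z \<noteq> proj z"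
  obtains z where "z \<in> cball b r" and "b + r *\<^sub>R sgn (z - proj z) = z"
proof -
  have "continuous_on (cball b r) (\<lambda>z. b + r *\<^sub>R sgn (z - proj z))"
    using continuous_on_subset[OF continuous_on_proj assms(2)] assms(3) by (intro continuous_intros) auto
  moreover have "(\<lambda>z. b + r *\<^sub>R sgn (z - proj z)) \<in> cball b r \<rightarrow> cball b r"
    using assms(1,3) by (auto simp: dist_norm norm_sgn)
  ultimately show ?thesis
    using brouwer_ball[OF assms(1)] that by blast
qed

lemma proj_fixed_point_on_ray:
  assumes "z \<in> tube" and fixed: "c + \<tau> *\<^sub>R n + r *\<^sub>R sgn (z - proj z) = z"
    and "0 < r" "2 * r \<le> dist z (proj z)"
    and proj_b: "proj (c + \<tau> *\<^sub>R n) = c" and "norm n = 1" "0 < \<tau>"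
  shows "proj z = c" and "z = c + (\<tau> + r) *\<^sub>R n"
proof -
  define p \<rho> s where "p = proj z" and "\<rho> = dist z p" and "s = sgn (z - p)"
  have "z \<noteq> p"
    using assms(3,4) unfolding p_def by auto
  then have norm_s: "norm s = 1" and z_p: "z - p = \<rho> *\<^sub>R s"
    by (simp_all add: s_def \<rho>_def dist_norm sgn_div_norm norm_sgn)
  have b_p: "c + \<tau> *\<^sub>R n = p + (\<rho> - r) *\<^sub>R s"
    using fixed z_p unfolding s_def[symmetric] p_def[symmetric] by (simp add: algebra_simps)
  have "(\<rho> - r) *\<^sub>R s = (1 - r / \<rho>) *\<^sub>R (z - p)"
  proof -
    have "(1 - r / \<rho>) * \<rho> = \<rho> - r"
      using \<open>z \<noteq> p\<close> by (simp add: \<rho>_def field_simps)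
    then show ?thesis
      by (simp add: z_p)
  qed
  \<comment> \<open>So c + \<tau> n lies on the segment from proj z to z and has the same nearest point.\<close>
  then have "c + \<tau> *\<^sub>R n = p + (1 - r / \<rho>) *\<^sub>R (z - p)"
    using b_p by simp
  moreover have "r / \<rho> \<le> 1"
    using assms(3,4) unfolding \<rho>_def p_def by (simp add: divide_le_eq_1)
  ultimately have "proj (c + \<tau> *\<^sub>R n) = p"
    using proj_segment[OF assms(1), of "1 - r / \<rho>"] assms(3,4) unfolding p_def \<rho>_def by simp
  then show "proj z = c"
    using proj_b unfolding p_def by simp
  then have "\<tau> *\<^sub>R n = (\<rho> - r) *\<^sub>R s"
    using b_p unfolding p_def by simp
  moreover have "\<tau> = \<rho> - r"
  proof -
    have "norm (\<tau> *\<^sub>R n) = norm ((\<rho> - r) *\<^sub>R s)"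
      using \<open>\<tau> *\<^sub>R n = (\<rho> - r) *\<^sub>R s\<close> by simp
    then show ?thesis
      using assms(3,4,6,7) norm_s unfolding \<rho>_def p_def by simp
  qed
  ultimately have "s = n"
    using assms(7) by simp
  then show "z = c + (\<tau> + r) *\<^sub>R n"
    using z_p \<open>proj z = c\<close> \<open>\<tau> = \<rho> - r\<close> unfolding p_def by (simp add: algebra_simps)
qed

lemma proj_ray_extend:
  assumes "c \<in> A" and "norm n = 1" and "0 < \<tau>" "\<tau> < R" and proj_b: "proj (c + \<tau> *\<^sub>R n) = c"
  shows "\<exists>s>\<tau>. s < R \<and> proj (c + s *\<^sub>R n) = c"
proof -
  let ?b = "c + \<tau> *\<^sub>R n"
  have "?b \<in> tube"
    using assms by (intro tube_contains[of _ c]) (auto simp: dist_norm)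
  then have infdist_b: "infdist ?b A = \<tau>"
    using dist_proj[OF \<open>?b \<in> tube\<close>] proj_b assms(2,3) by (simp add: dist_norm)
  obtain r0 where "0 < r0" "cball ?b r0 \<subseteq> tube"
    using open_tube \<open>?b \<in> tube\<close> open_contains_cball by blast
  define r where "r = min r0 (min (\<tau>/4) ((R - \<tau>)/2))"
  have r: "0 < r" "r \<le> \<tau>/4" "\<tau> + r < R"
  proof -
    show "0 < r"
      using \<open>0 < r0\<close> assms(3,4) unfolding r_def by auto
    show "r \<le> \<tau>/4"
      unfolding r_def by (intro min.coboundedI2 min.cobounded1)
    have "r \<le> (R - \<tau>)/2"
      unfolding r_def by (intro min.coboundedI2 min.cobounded2)
    then show "\<tau> + r < R"
      using assms(4) by (simp add: field_simps)
  qed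
  have ball_r: "cball ?b r \<subseteq> tube"
    using \<open>cball ?b r0 \<subseteq> tube\<close> subset_cball[of r r0 ?b] unfolding r_def by auto
  have far: "\<tau> - r \<le> dist z (proj z)" if "z \<in> cball ?b r" for z
    using that ball_r dist_proj infdist_triangle[of ?b A z] infdist_b by (auto simp: dist_commute)
  have "z \<noteq> proj z" if "z \<in> cball ?b r" for z
    using far[OF that] r by auto
  then obtain z where z: "z \<in> cball ?b r" and fixed: "?b + r *\<^sub>R sgn (z - proj z) = z"
    using proj_sphere_fixed_point[OF \<open>0 < r\<close> ball_r] by blast
  have "2 * r \<le> dist z (proj z)" and "z \<in> tube"
    using far[OF z] r z ball_r by auto
  then have "proj z = c" and "z = c + (\<tau> + r) *\<^sub>R n"
    using proj_fixed_point_on_ray[OF _ fixed] r(1) proj_b assms(2,3) by auto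
  then show ?thesis
    using r by (intro exI[of _ "\<tau> + r"]) auto
qed

lemma proj_ray:
  assumes "c \<in> A" and "norm n = 1" and "0 < t0" "t0 < R" and "proj (c + t0 *\<^sub>R n) = c"
    and "0 \<le> t" "t < R"
  shows "proj (c + t *\<^sub>R n) = c"
proof -
  define T where "T = {s. 0 \<le> s \<and> s < R \<and> proj (c + s *\<^sub>R n) = c}"
  have in_tube: "c + s *\<^sub>R n \<in> tube" if "0 \<le> s" "s < R" for s
    using that assms(1,2) by (intro tube_contains[of _ c]) (auto simp: dist_norm)
  have T_down: "s \<in> T" if "s' \<in> T" "0 \<le> s" "s \<le> s'" for s s'
  proof (cases "s' = 0")
    case True
    then show ?thesis
      using that proj_self[OF assms(1)] R_pos by (simp add: T_def)
  next
    case False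
    then have "proj (c + (s / s') *\<^sub>R (s' *\<^sub>R n)) = c"
      using proj_segment[OF in_tube, of s' "s / s'"] that by (auto simp: T_def)
    then show ?thesis
      using that False by (auto simp: T_def)
  qed
  have "t0 \<in> T" and bdd: "bdd_above T"
    using assms(3-5) by (auto simp: T_def intro: bdd_aboveI[of _ R])
  define \<tau> where "\<tau> = Sup T"
  have "t0 \<le> \<tau>"
    unfolding \<tau>_def by (rule cSup_upper[OF \<open>t0 \<in> T\<close> bdd])
  have below_T: "s \<in> T" if "0 \<le> s" "s < \<tau>" for s
    using less_cSupE[of s T] \<open>t0 \<in> T\<close> that T_down unfolding \<tau>_def by (metis empty_iff less_le)
  have "R \<le> \<tau>"
  proof (rule ccontr)
    assume "\<not> R \<le> \<tau>"
    \<comment> \<open>By continuity of proj the ray property persists at the supremum, and then beyond it.\<close>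
    have "continuous_on {0..\<tau>} (\<lambda>s. proj (c + s *\<^sub>R n))"
      using \<open>\<not> R \<le> \<tau>\<close> in_tube
      by (intro continuous_on_compose2[OF continuous_on_proj] continuous_intros) auto
    then have "proj (c + \<tau> *\<^sub>R n) = c"
      using continuous_constant_on_closure[of "{0..<\<tau>}" "\<lambda>s. proj (c + s *\<^sub>R n)" c \<tau>]
        below_T \<open>t0 \<le> \<tau>\<close> assms(3) by (auto simp: T_def)
    then obtain s where "\<tau> < s" "s < R" "proj (c + s *\<^sub>R n) = c"
      using proj_ray_extend[OF assms(1,2), of \<tau>] \<open>t0 \<le> \<tau>\<close> \<open>\<not> R \<le> \<tau>\<close> assms(3) by auto
    then have "s \<in> T"
      using \<open>t0 \<le> \<tau>\<close> assms(3) by (auto simp: T_def)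
    then have "s \<le> \<tau>"
      unfolding \<tau>_def by (rule cSup_upper[OF _ bdd])
    then show False
      using \<open>\<tau> < s\<close> by simp
  qed
  then show ?thesis
    using below_T assms(6,7) by (auto simp: T_def)
qed

definition proximal_normal :: "'a \<Rightarrow> 'a \<Rightarrow> bool" where
  "proximal_normal c n \<longleftrightarrow>
     c \<in> A \<and> norm n = 1 \<and> (\<forall>q\<in>A. 2 * R * ((q - c) \<bullet> n) \<le> (norm (q - c))\<^sup>2)"

lemma proximal_normal_ray:
  assumes "c \<in> A" and "norm n = 1" and "0 < t0" "t0 < R" and "proj (c + t0 *\<^sub>R n) = c"
  shows "proximal_normal c n"
  unfolding proximal_normal_def
proof (intro conjI ballI assms(1,2))
  fix q assume "q \<in> A"
  \<comment> \<open>Expand the condition that c stays nearest to c + w n for all w below R.\<close>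
  have ray_bound: "w * (2 * ((q - c) \<bullet> n)) \<le> (norm (q - c))\<^sup>2" if "0 < w" "w < R" for w
  proof -
    have "c + w *\<^sub>R n \<in> tube"
      using that assms(1,2) by (intro tube_contains[of _ c]) (auto simp: dist_norm)
    then have "dist (c + w *\<^sub>R n) c \<le> dist (c + w *\<^sub>R n) q"
      using proj_nearest[of "c + w *\<^sub>R n" q] proj_ray[OF assms, of w] \<open>q \<in> A\<close> that by simp
    moreover have "dist (c + w *\<^sub>R n) c = w"
      using assms(2) that by (simp add: dist_norm)
    moreover have "dist (c + w *\<^sub>R n) q = norm ((q - c) - w *\<^sub>R n)"
    proof -
      have flip: "c + w *\<^sub>R n - q = - ((q - c) - w *\<^sub>R n)"
        by (simp add: algebra_simps)
      show ?thesis
        unfolding dist_norm flip norm_minus_cancel ..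
    qed
    ultimately have "w \<le> norm ((q - c) - w *\<^sub>R n)"
      by linarith
    then have "w\<^sup>2 \<le> (norm ((q - c) - w *\<^sub>R n))\<^sup>2"
      using that by (intro power_mono) auto
    also have "\<dots> = (norm (q - c))\<^sup>2 + w\<^sup>2 - 2 * w * ((q - c) \<bullet> n)"
      using dot_norm_neg[of "q - c" "w *\<^sub>R n"] assms(2) by (simp add: field_simps)
    finally show ?thesis
      by simp
  qed
  show "2 * R * ((q - c) \<bullet> n) \<le> (norm (q - c))\<^sup>2"
  proof (cases "(q - c) \<bullet> n > 0")
    case True
    have "R \<le> (norm (q - c))\<^sup>2 / (2 * ((q - c) \<bullet> n))"
      using ray_bound True by (intro dense_le_bounded[OF R_pos]) (simp add: le_divide_eq)
    then show ?thesis
      using True by (simp add: le_divide_eq mult.commute mult.left_commute)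
  next
    case False
    then have "2 * R * ((q - c) \<bullet> n) \<le> 0"
      using R_pos by (simp add: mult_nonneg_nonpos)
    then show ?thesis
      using zero_le_power2[of "norm (q - c)"] by linarith
  qed
qed

lemma proximal_normal_proj:
  assumes "y \<in> tube" and "y \<notin> A"
  shows "proximal_normal (proj y) (sgn (y - proj y))"
proof -
  have "y \<noteq> proj y"
    using proj_in[OF assms(1)] assms(2) by auto
  then have "proj y + dist y (proj y) *\<^sub>R sgn (y - proj y) = y"
    by (simp add: sgn_div_norm dist_norm)
  moreover have "dist y (proj y) < R"
    using dist_proj[OF assms(1)] assms(1) by simp
  ultimately show ?thesis
    using \<open>y \<noteq> proj y\<close> by (intro proximal_normal_ray proj_in assms(1)) (auto simp: norm_sgn)
qed

lemma proximal_normal_secant_le: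
  assumes "proximal_normal c n" and "y \<in> A" and "dist c x \<le> dist y x"
  shows "(y - x) \<bullet> n \<le> 2 * (dist y x)\<^sup>2 / R + dist c x"
proof -
  have "norm n = 1"
    using assms(1) by (simp add: proximal_normal_def)
  have "dist y c \<le> 2 * dist y x"
    using dist_triangle[of y c x] assms(3) dist_commute[of x c] by linarith
  then have "2 * R * ((y - c) \<bullet> n) \<le> (2 * dist y x)\<^sup>2"
    using assms(1,2) power_mono[of "dist y c" "2 * dist y x" 2]
    by (force simp: proximal_normal_def dist_norm)
  then have "(y - c) \<bullet> n \<le> 2 * (dist y x)\<^sup>2 / R"
    using R_pos by (simp add: field_simps power2_eq_square)
  moreover have "(c - x) \<bullet> n \<le> dist c x"
    using norm_cauchy_schwarz[of "c - x" n] \<open>norm n = 1\<close> by (simp add: dist_norm)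
  moreover have "(y - x) \<bullet> n = (y - c) \<bullet> n + (c - x) \<bullet> n"
    by (simp add: inner_diff_left)
  ultimately show ?thesis
    by linarith
qed

lemma tangent_inner_proximal_normal_le:
  assumes "v \<in> Tan A x" and "norm v = 1" and "0 < \<eta>"
  shows "\<exists>\<gamma>>0. \<forall>c n. proximal_normal c n \<longrightarrow> dist c x < \<gamma> \<longrightarrow> v \<bullet> n \<le> \<eta>"
proof -
  define e where "e = min \<eta> 1"
  have e: "0 < e" "e \<le> 1" "e \<le> \<eta>"
    using assms(3) by (auto simp: e_def)
  obtain xs r where xs: "\<And>i. xs i \<in> A \<and> xs i \<noteq> x" "xs \<longlonglongrightarrow> x"
    and r: "\<And>i. 0 < r i" "(\<lambda>i. r i *\<^sub>R (xs i - x)) \<longlonglongrightarrow> v"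
    using assms(1,2) unfolding Tan_def by auto
  \<comment> \<open>A secant direction w = r (y - x) through a point y of A close to x approximates v.\<close>
  have "\<forall>\<^sub>F i in sequentially. dist (r i *\<^sub>R (xs i - x)) v < e/2 \<and> dist (xs i) x < R * e / 16"
    using tendstoD[OF r(2), of "e/2"] tendstoD[OF xs(2), of "R * e / 16"] e(1) R_pos
    by (intro eventually_conj) simp_all
  then obtain i where w_v: "dist (r i *\<^sub>R (xs i - x)) v < e/2" and y_x: "dist (xs i) x < R * e / 16"
    using eventually_happens'[OF sequentially_bot] by blast
  define y s w where "y = xs i" and "s = dist y x" and "w = r i *\<^sub>R (y - x)"
  have "0 < s" "y \<in> A"
    using xs(1)[of i] unfolding s_def y_def by auto
  have norm_w: "norm w \<le> 2" and r_s: "r i * s = norm w"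
    using w_v norm_triangle_ineq[of "w - v" v] e(2) assms(2) r(1)[of i]
    by (auto simp: w_def y_def s_def dist_norm)
  show ?thesis
  proof (intro exI[of _ "s * e / 8"] conjI allI impI)
    show "0 < s * e / 8"
      using \<open>0 < s\<close> e(1) by simp
    fix c n
    assume normal: "proximal_normal c n" and c_x: "dist c x < s * e / 8"
    have "norm n = 1"
      using normal by (simp add: proximal_normal_def)
    have "s * e / 8 \<le> s"
      using e(1,2) \<open>0 < s\<close> by (simp add: mult_left_le_one_le)
    then have "(y - x) \<bullet> n \<le> 2 * s\<^sup>2 / R + s * e / 8"
      using proximal_normal_secant_le[OF normal \<open>y \<in> A\<close>, of x] c_x unfolding s_def by linarith
    moreover have "2 * s\<^sup>2 / R \<le> s * e / 8"
    proof -
      have "2 * s / R \<le> e / 8"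
        using y_x R_pos unfolding s_def y_def by (simp add: field_simps)
      then have "s * (2 * s / R) \<le> s * (e / 8)"
        using \<open>0 < s\<close> by (intro mult_left_mono) auto
      then show ?thesis
        by (simp add: power2_eq_square)
    qed
    ultimately have "(y - x) \<bullet> n \<le> s * e / 4"
      by linarith
    then have "r i * ((y - x) \<bullet> n) \<le> r i * (s * e / 4)"
      using r(1)[of i] by (intro mult_left_mono) auto
    then have "w \<bullet> n \<le> norm w * e / 4"
      unfolding r_s[symmetric] by (simp add: w_def mult.assoc)
    also have "\<dots> \<le> e / 2"
      using norm_w e(1) by simp
    finally have "w \<bullet> n \<le> e / 2" .
    moreover have "(v - w) \<bullet> n \<le> e / 2"
      using norm_cauchy_schwarz[of "v - w" n] \<open>norm n = 1\<close> w_v norm_minus_commute[of v w]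
      by (simp add: w_def y_def dist_norm)
    ultimately show "v \<bullet> n \<le> \<eta>"
      using e(3) by (simp add: inner_diff_left)
  qed
qed

lemma infdist_step_le:
  assumes "a \<in> A" and "0 < h" "h < R" and "norm v = 1" and "0 \<le> \<eta>"
    and normals: "\<And>c n. proximal_normal c n \<Longrightarrow> dist c a \<le> 2 * h \<Longrightarrow> v \<bullet> n \<le> \<eta>"
  shows "infdist (a + h *\<^sub>R v) A \<le> h * (2 * h / R + \<eta>)"
proof (cases "a + h *\<^sub>R v \<in> A")
  case True
  then show ?thesis
    using assms(2,3,5) by simp
next
  case False
  define p where "p = a + h *\<^sub>R v"
  have "dist p a = h"
    using assms(2,4) by (simp add: p_def dist_norm)
  then have "p \<in> tube"
    using assms(1,3) by (intro tube_contains) auto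
  define c n where "c = proj p" and "n = sgn (p - c)"
  have normal: "proximal_normal c n"
    using proximal_normal_proj[OF \<open>p \<in> tube\<close>] False unfolding c_def n_def p_def by simp
  have "dist p c = infdist p A" and "infdist p A \<le> h"
    using dist_proj[OF \<open>p \<in> tube\<close>] infdist_le[OF assms(1), of p] \<open>dist p a = h\<close> by (auto simp: c_def)
  then have "dist c a \<le> 2 * h"
    using dist_triangle[of c a p] \<open>dist p a = h\<close> by (simp add: dist_commute)
  then have "norm (a - c) \<le> 2 * h"
    by (metis dist_commute dist_norm)
  have "infdist p A = (p - c) \<bullet> n"
  proof (cases "p = c")
    case False
    then have "(p - c) \<bullet> (p - c) / norm (p - c) = norm (p - c)"
      by (simp add: dot_square_norm power2_eq_square)
    then show ?thesis
      using \<open>dist p c = infdist p A\<close> by (simp add: n_def sgn_div_norm dist_norm divide_inverse_commute)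
  qed (use \<open>dist p c = infdist p A\<close> in \<open>simp add: n_def\<close>)
  also have "\<dots> = (a - c) \<bullet> n + h * (v \<bullet> n)"
    by (simp add: p_def algebra_simps inner_add_left inner_diff_left)
  also have "(a - c) \<bullet> n \<le> 2 * h\<^sup>2 / R"
  proof -
    have "2 * R * ((a - c) \<bullet> n) \<le> (norm (a - c))\<^sup>2"
      using normal assms(1) by (simp add: proximal_normal_def)
    also have "\<dots> \<le> (2 * h)\<^sup>2"
      using \<open>norm (a - c) \<le> 2 * h\<close> by (intro power_mono) auto
    finally show ?thesis
      using R_pos by (simp add: field_simps power2_eq_square)
  qed
  also have "h * (v \<bullet> n) \<le> h * \<eta>"
    using normals[OF normal \<open>dist c a \<le> 2 * h\<close>] assms(2) by simp
  finally show ?thesis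
    unfolding p_def by (simp add: field_simps power2_eq_square)
qed

lemma eventually_infdist_tangent_step_le:
  assumes "v \<in> Tan A x" and "norm v = 1" and "0 < \<epsilon>"
  shows "\<forall>\<^sub>F \<delta> in at_right 0. \<forall>a\<in>A. \<forall>h. dist a x < \<delta> \<longrightarrow> 0 < h \<longrightarrow> h < \<delta> \<longrightarrow>
           infdist (a + h *\<^sub>R v) A \<le> \<epsilon> * h"
proof -
  obtain \<gamma> where "0 < \<gamma>" and \<gamma>: "\<And>c n. proximal_normal c n \<Longrightarrow> dist c x < \<gamma> \<Longrightarrow> v \<bullet> n \<le> \<epsilon> / 2"
    using tangent_inner_proximal_normal_le[OF assms(1,2), of "\<epsilon> / 2"] assms(3) by auto
  have "infdist (a + h *\<^sub>R v) A \<le> \<epsilon> * h"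
    if "a \<in> A" "dist a x < \<delta>" "0 < h" "h < \<delta>" "\<delta> \<le> \<gamma> / 3" "\<delta> \<le> \<epsilon> * R / 4" "\<delta> \<le> R" for a h \<delta>
  proof -
    have "v \<bullet> n \<le> \<epsilon> / 2" if "proximal_normal c n" "dist c a \<le> 2 * h" for c n
      using \<gamma>[OF that(1)] dist_triangle[of c x a] that(2) \<open>dist a x < \<delta>\<close> \<open>h < \<delta>\<close> \<open>\<delta> \<le> \<gamma> / 3\<close>
      by simp
    then have "infdist (a + h *\<^sub>R v) A \<le> h * (2 * h / R + \<epsilon> / 2)"
      using that assms(2,3) by (intro infdist_step_le) auto
    also have "\<dots> \<le> h * \<epsilon>"
      using that R_pos by (intro mult_left_mono) (auto simp: field_simps)
    finally show ?thesis
      by (simp add: mult.commute)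
  qed
  then show ?thesis
    unfolding eventually_at_right_field using \<open>0 < \<gamma>\<close> assms(3) R_pos
    by (intro exI[of _ "min (\<gamma> / 3) (min (\<epsilon> * R / 4) R)"]) auto
qed

lemma tangent_frame_approx:
  fixes V :: "nat \<Rightarrow> 'a"
  assumes V: "\<And>j. j < k \<Longrightarrow> V j \<in> Tan A x \<and> norm (V j) = 1" and "0 < \<epsilon>"
  shows "\<exists>\<delta>>0. \<forall>a\<in>A. \<forall>h. dist a x < \<delta> \<longrightarrow> 0 < h \<longrightarrow> h < \<delta> \<longrightarrow>
           (\<exists>Z. \<forall>j<k. Z j \<in> A \<and> norm (Z j - (a + h *\<^sub>R V j)) \<le> \<epsilon> * h)"
proof -
  have "\<forall>\<^sub>F \<delta> in at_right 0. \<forall>j\<in>{..<k}. \<forall>a\<in>A. \<forall>h. dist a x < \<delta> \<longrightarrow> 0 < h \<longrightarrow> h < \<delta> \<longrightarrow>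
      infdist (a + h *\<^sub>R V j) A \<le> \<epsilon> * h"
    unfolding eventually_ball_finite_distrib[OF finite_lessThan]
  proof
    fix j
    assume "j \<in> {..<k}"
    then show "\<forall>\<^sub>F \<delta> in at_right 0. \<forall>a\<in>A. \<forall>h. dist a x < \<delta> \<longrightarrow> 0 < h \<longrightarrow> h < \<delta> \<longrightarrow>
        infdist (a + h *\<^sub>R V j) A \<le> \<epsilon> * h"
      using V assms(2) by (intro eventually_infdist_tangent_step_le) auto
  qed
  then have "\<forall>\<^sub>F \<delta> in at_right 0. 0 < \<delta> \<and> (\<forall>j\<in>{..<k}. \<forall>a\<in>A. \<forall>h. dist a x < \<delta> \<longrightarrow> 0 < h \<longrightarrow> h < \<delta> \<longrightarrow>
      infdist (a + h *\<^sub>R V j) A \<le> \<epsilon> * h)"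
    by (intro eventually_conj eventually_at_right_less)
  then obtain \<delta> where "0 < \<delta>" and \<delta>: "\<And>j a h. j < k \<Longrightarrow> a \<in> A \<Longrightarrow> dist a x < \<delta> \<Longrightarrow> 0 < h \<Longrightarrow> h < \<delta> \<Longrightarrow>
      infdist (a + h *\<^sub>R V j) A \<le> \<epsilon> * h"
    using eventually_happens'[OF trivial_limit_at_right_real] by blast
  show ?thesis
  proof (intro exI[of _ \<delta>] conjI ballI allI impI)
    fix a h
    assume "a \<in> A" "dist a x < \<delta>" "0 < h" "h < \<delta>"
    then have "\<exists>z\<in>A. norm (z - (a + h *\<^sub>R V j)) \<le> \<epsilon> * h" if "j < k" for j
      using \<delta>[OF that] infdist_attains_inf[OF closed nonempty, of "a + h *\<^sub>R V j"]
      by (metis dist_commute dist_norm)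
    then show "\<exists>Z. \<forall>j<k. Z j \<in> A \<and> norm (Z j - (a + h *\<^sub>R V j)) \<le> \<epsilon> * h"
      by metis
  qed (rule \<open>0 < \<delta>\<close>)
qed

lemma related_near_tangent_frame:
  fixes V :: "nat \<Rightarrow> 'a"
  assumes "2 \<le> k" and V: "\<And>j. j < k \<Longrightarrow> V j \<in> Tan A x \<and> norm (V j) = 1"
    and "0 < \<theta>" and \<theta>: "\<theta> * fact k \<le> sqrt (gram k V)"
  shows "\<exists>\<delta>>0. \<forall>a\<in>A. \<forall>b\<in>A. dist x a < \<delta> \<longrightarrow> dist x b < \<delta> \<longrightarrow> a \<noteq> b \<longrightarrow>
           related A k (\<theta> / (2 ^ (k + 2) * real k)) a b"
proof -
  have "0 < \<theta> * fact k"
    using \<open>0 < \<theta>\<close> by simp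
  then have "0 < sqrt (gram k V)"
    using \<theta> by linarith
  then have "0 < gram k V"
    by simp
  then obtain \<epsilon> where "0 < \<epsilon>" and "(1 + \<epsilon>) ^ k \<le> 2"
    and \<epsilon>: "fact k * real k * 4 ^ k * \<epsilon> \<le> 3/4 * (gram k V / (real k)\<^sup>2)"
    by (rule frame_tolerance_exists[OF assms(1)])
  obtain \<delta> where "0 < \<delta>" and \<delta>: "\<forall>a\<in>A. \<forall>h. dist a x < \<delta> \<longrightarrow> 0 < h \<longrightarrow> h < \<delta> \<longrightarrow>
      (\<exists>Z. \<forall>j<k. Z j \<in> A \<and> norm (Z j - (a + h *\<^sub>R V j)) \<le> \<epsilon> * h)"
    using tangent_frame_approx[of k V, OF V \<open>0 < \<epsilon>\<close>] by blast
  have "related A k (\<theta> / (2 ^ (k + 2) * real k)) a b"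
    if "a \<in> A" "b \<in> A" "dist x a < \<delta> / 2" "dist x b < \<delta> / 2" "a \<noteq> b" for a b
  proof -
    have "dist a x < \<delta>" "dist a b < \<delta>"
      using that dist_triangle[of a b x] dist_commute[of a x] zero_le_dist[of x a] zero_le_dist[of x b]
      by linarith+
    moreover have "0 < dist a b"
      using \<open>a \<noteq> b\<close> by simp
    ultimately obtain Z where "\<forall>j<k. Z j \<in> A \<and> norm (Z j - (a + dist a b *\<^sub>R V j)) \<le> \<epsilon> * dist a b"
      using \<delta> \<open>a \<in> A\<close> by blast
    then show ?thesis
      using V \<open>0 < \<epsilon>\<close> \<open>a \<noteq> b\<close>
      by (intro related_of_approx_tangent_frame[OF assms(1) _ \<theta> _ \<open>(1 + \<epsilon>) ^ k \<le> 2\<close> \<epsilon>]) auto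
  qed
  then show ?thesis
    using \<open>0 < \<delta>\<close> by (intro exI[of _ "\<delta> / 2"]) auto
qed

end

theorem lemma3p9:
  fixes A :: "'a::euclidean_space set" and x :: 'a and v :: "nat \<Rightarrow> 'a"
    and k :: nat and \<theta> :: real
  assumes "DIM('a) \<ge> 3" and "2 \<le> k" and "k \<le> DIM('a) - 1" and "\<theta> > 0"
    and "positive_reach A" and "x \<in> A"
    and "\<forall>i\<in>{1..k}. v i \<in> Tan A x \<and> norm (v i) = 1"
    and "Theta k (\<lambda>i. if i = 0 then 0 else v i) \<ge> \<theta>"
  shows "\<exists>\<delta>>0. \<forall>a b. a \<in> ball x \<delta> \<inter> A \<and> b \<in> ball x \<delta> \<inter> A \<and> a \<noteq> b \<longrightarrow>
           related A k (\<theta> / (2 ^ (k + 2) * real k)) a b"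
proof -
  have "\<exists>R. reach_radius A R"
    using assms(5) by (simp add: positive_reach_def reach_radius_def)
  then obtain R where "reach_radius A R" ..
  then interpret reach_radius A R .
  define V where "V i = v (Suc i)" for i
  have "\<theta> * fact k \<le> Theta k (\<lambda>i. if i = 0 then 0 else v i) * fact k"
    using assms(8) by simp
  also have "\<dots> \<le> sqrt (gram k V)"
    using Theta_unit_frame_le_sqrt_gram[of k v] assms(2,7) unfolding V_def by auto
  finally have "\<theta> * fact k \<le> sqrt (gram k V)" .
  moreover have "V j \<in> Tan A x \<and> norm (V j) = 1" if "j < k" for j
    using assms(7) that by (auto simp: V_def)
  ultimately obtain \<delta> where "0 < \<delta>" and \<delta>: "\<forall>a\<in>A. \<forall>b\<in>A. dist x a < \<delta> \<longrightarrow> dist x b < \<delta> \<longrightarrow> a \<noteq> b \<longrightarrow>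
      related A k (\<theta> / (2 ^ (k + 2) * real k)) a b"
    using related_near_tangent_frame[where k = k and V = V and \<theta> = \<theta>] assms(2,4) by blast
  then show ?thesis
    by (intro exI[of _ \<delta>]) auto
qed

end
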